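(* For any continuous map $T:X\to X$ of a compact metric space $X$, the set $Per(T)$ of periodic points is either empty or satisfies $h_{top}(T,Per(T))=0$.
   Context: $h_{top}(T,Z)$ denotes Bowen's topological entropy of an arbitrary subset $Z\subseteq X$: with $B_m(x,\varepsilon)=\{y:d(T^jx,T^jy)\le\varepsilon,0\le j<m\}$, $C(Z;t,n,\varepsilon)=\inf\sum_i2^{-tm_i}$ over countable covers of $Z$ by $B_{m_i}(x_i,\varepsilon)$ with $m_i\ge n$, $h(Z,\varepsilon)=\inf\{t:\lim_nC(Z;t,n,\varepsilon)=0\}$, $h_{top}(T,Z)=\lim_{\varepsilon\to0}h(Z,\varepsilon)$. *)

theory Defs
  imports "HOL-Analysis.Analysis"
begin

definition bowen_ball :: "('a::metric_space \<Rightarrow> 'a) \<Rightarrow> 'a set \<Rightarrow> nat \<Rightarrow> 'a \<Rightarrow> real \<Rightarrow> 'a set" where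
  "bowen_ball T X m x \<epsilon> = {y \<in> X. \<forall>j<m. dist ((T ^^ j) x) ((T ^^ j) y) \<le> \<epsilon>}"

definition bowen_C :: "('a::metric_space \<Rightarrow> 'a) \<Rightarrow> 'a set \<Rightarrow> 'a set \<Rightarrow> real \<Rightarrow> nat \<Rightarrow> real \<Rightarrow> ennreal" where
  "bowen_C T X Z t n \<epsilon> =
     (INF c \<in> {(I, xs, ms). (I::nat set) \<subseteq> UNIV \<and> (\<forall>i\<in>I. xs i \<in> X \<and> ms i \<ge> n)
                         \<and> Z \<subseteq> (\<Union>i\<in>I. bowen_ball T X (ms i) (xs i) \<epsilon>)}.
        case c of (I, xs, ms) \<Rightarrow>
          (\<Sum>i. if i \<in> I then ennreal (2 powr (- t * real (ms i))) else 0))"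

definition bowen_h :: "('a::metric_space \<Rightarrow> 'a) \<Rightarrow> 'a set \<Rightarrow> 'a set \<Rightarrow> real \<Rightarrow> ereal" where
  "bowen_h T X Z \<epsilon> = Inf {ereal t | t. (\<lambda>n. bowen_C T X Z t n \<epsilon>) \<longlonglongrightarrow> 0}"

definition htop :: "('a::metric_space \<Rightarrow> 'a) \<Rightarrow> 'a set \<Rightarrow> 'a set \<Rightarrow> ereal" where
  "htop T X Z = Lim (at_right 0) (\<lambda>\<epsilon>. bowen_h T X Z \<epsilon>)"

definition periodic_points :: "('a \<Rightarrow> 'a) \<Rightarrow> 'a set \<Rightarrow> 'a set" where
  "periodic_points T X = {x \<in> X. \<exists>n>0. (T ^^ n) x = x}"

end

theory Submission
  imports Defs
begin

text \<open>A point of period k is determined, along its whole forward orbit, by its first k iterates.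
  By compactness and uniform continuity of T, \<dots>, T^(k-1), finitely many points of period k
  therefore \<epsilon>-shadow every point of period k for all time, so Per(T) is covered by countably many
  infinite Bowen balls. Each of them lies in Bowen balls of arbitrarily large length, which makes
  C(Per(T); t, n, \<epsilon>) = 0 for every t > 0, whereas C(Z; t, n, \<epsilon>) \<ge> 1 for t \<le> 0 and nonempty Z.
  Hence h(Per(T), \<epsilon>) = 0 for every \<epsilon> > 0.\<close>

definition infinite_bowen_ball :: "('a::metric_space \<Rightarrow> 'a) \<Rightarrow> 'a set \<Rightarrow> 'a \<Rightarrow> real \<Rightarrow> 'a set" where
  "infinite_bowen_ball T X x \<epsilon> = {y \<in> X. \<forall>j. dist ((T ^^ j) x) ((T ^^ j) y) \<le> \<epsilon>}"

lemma infinite_bowen_ball_subset_bowen_ball: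
  "infinite_bowen_ball T X x \<epsilon> \<subseteq> bowen_ball T X m x \<epsilon>"
  by (auto simp: infinite_bowen_ball_def bowen_ball_def)

lemma funpow_image_subset: "T ` X \<subseteq> X \<Longrightarrow> (T ^^ j) ` X \<subseteq> X"
  by (induction j) auto

lemma continuous_on_funpow:
  assumes "continuous_on X T" "T ` X \<subseteq> X"
  shows "continuous_on X (T ^^ j)"
proof (induction j)
  case (Suc j)
  then show ?case
    using assms funpow_image_subset[OF assms(2), of j]
    by (auto simp: funpow_Suc_right intro: continuous_on_compose2[of X T X "T ^^ j"])
qed (simp add: continuous_on_id)

lemma compact_fixed_points:
  fixes f :: "'a::metric_space \<Rightarrow> 'a"
  assumes "compact X" "continuous_on X f"
  shows "compact {x \<in> X. f x = x}"
proof -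
  have "closed {x \<in> X. dist (f x) x = 0}"
    using assms by (intro continuous_closed_preimage_constant continuous_intros compact_imp_closed)
  then have "compact (X \<inter> {x \<in> X. f x = x})"
    using assms(1) by auto
  then show ?thesis
    by (simp add: Int_absorb1)
qed

lemma uniformly_continuous_iterates:
  fixes T :: "'a::metric_space \<Rightarrow> 'a"
  assumes "compact X" "continuous_on X T" "T ` X \<subseteq> X" "\<epsilon> > 0"
  shows "\<exists>\<delta>>0. \<forall>x\<in>X. \<forall>y\<in>X. dist x y < \<delta> \<longrightarrow> (\<forall>j<k. dist ((T ^^ j) x) ((T ^^ j) y) < \<epsilon>)"
proof (induction k)
  case 0
  show ?case by (intro exI[of _ 1]) simp
next
  case (Suc k)
  then obtain \<delta> where \<delta>: "\<delta> > 0"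
    "\<And>x y j. x \<in> X \<Longrightarrow> y \<in> X \<Longrightarrow> dist x y < \<delta> \<Longrightarrow> j < k \<Longrightarrow> dist ((T ^^ j) x) ((T ^^ j) y) < \<epsilon>"
    by blast
  have "uniformly_continuous_on X (T ^^ k)"
    using compact_uniformly_continuous continuous_on_funpow assms by blast
  then obtain \<delta>' where \<delta>': "\<delta>' > 0"
    "\<And>x y. x \<in> X \<Longrightarrow> y \<in> X \<Longrightarrow> dist y x < \<delta>' \<Longrightarrow> dist ((T ^^ k) y) ((T ^^ k) x) < \<epsilon>"
    using assms(4) unfolding uniformly_continuous_on_def by metis
  show ?case
    using \<delta> \<delta>' by (intro exI[of _ "min \<delta> \<delta>'"]) (auto simp: less_Suc_eq dist_commute)
qed

lemma fixed_points_funpow_finite_cover: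
  fixes T :: "'a::metric_space \<Rightarrow> 'a"
  assumes "compact X" "continuous_on X T" "T ` X \<subseteq> X" "\<epsilon> > 0" "k > 0"
  shows "\<exists>F. finite F \<and> F \<subseteq> X \<and>
           {y \<in> X. (T ^^ k) y = y} \<subseteq> (\<Union>x\<in>F. infinite_bowen_ball T X x \<epsilon>)"
proof -
  define S where "S = {x \<in> X. (T ^^ k) x = x}"
  obtain \<delta> where "\<delta> > 0" and \<delta>:
    "\<And>x y j. x \<in> X \<Longrightarrow> y \<in> X \<Longrightarrow> dist x y < \<delta> \<Longrightarrow> j < k \<Longrightarrow> dist ((T ^^ j) x) ((T ^^ j) y) < \<epsilon>"
    using uniformly_continuous_iterates[OF assms(1-4)] by blast
  have "compact S"
    unfolding S_def using assms by (intro compact_fixed_points continuous_on_funpow)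
  moreover have "S \<subseteq> (\<Union>x\<in>S. ball x \<delta>)"
    using \<open>\<delta> > 0\<close> by auto
  ultimately obtain F where F: "F \<subseteq> S" "finite F" "S \<subseteq> (\<Union>x\<in>F. ball x \<delta>)"
    by (metis compactE_image open_ball)
  have "y \<in> (\<Union>x\<in>F. infinite_bowen_ball T X x \<epsilon>)" if "y \<in> S" for y
  proof -
    obtain x where x: "x \<in> F" "dist x y < \<delta>"
      using F(3) \<open>y \<in> S\<close> by auto
    have "dist ((T ^^ j) x) ((T ^^ j) y) \<le> \<epsilon>" for j
      using \<delta>[of x y "j mod k"] x F(1) \<open>y \<in> S\<close> \<open>k > 0\<close>
      by (auto simp: S_def funpow_mod_eq)
    then show ?thesis
      using x(1) \<open>y \<in> S\<close> by (auto simp: S_def infinite_bowen_ball_def)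
  qed
  then show ?thesis
    using F by (auto simp: S_def)
qed

lemma periodic_points_countable_cover:
  fixes T :: "'a::metric_space \<Rightarrow> 'a"
  assumes "compact X" "continuous_on X T" "T ` X \<subseteq> X" "\<epsilon> > 0"
  shows "\<exists>C. countable C \<and> C \<subseteq> X \<and>
           periodic_points T X \<subseteq> (\<Union>x\<in>C. infinite_bowen_ball T X x \<epsilon>)"
proof -
  have "\<forall>k. \<exists>F. finite F \<and> F \<subseteq> X \<and>
      {y \<in> X. (T ^^ Suc k) y = y} \<subseteq> (\<Union>x\<in>F. infinite_bowen_ball T X x \<epsilon>)"
    using fixed_points_funpow_finite_cover[OF assms zero_less_Suc] by blast
  from choice[OF this] obtain F where F: "\<And>k. finite (F k)" "\<And>k. F k \<subseteq> X"
    "\<And>k. {y \<in> X. (T ^^ Suc k) y = y} \<subseteq> (\<Union>x\<in>F k. infinite_bowen_ball T X x \<epsilon>)"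
    by blast
  have "periodic_points T X = (\<Union>k. {y \<in> X. (T ^^ Suc k) y = y})"
    unfolding periodic_points_def by (auto simp: gr0_conv_Suc)
  also have "\<dots> \<subseteq> (\<Union>x\<in>(\<Union>k. F k). infinite_bowen_ball T X x \<epsilon>)"
    using F(3) by blast
  finally show ?thesis
    using F(1,2) by (intro exI[of _ "\<Union>k. F k"]) (blast intro: countable_finite)
qed

lemma bowen_C_le_cover_sum:
  assumes "\<forall>i\<in>I. xs i \<in> X \<and> n \<le> ms i" "Z \<subseteq> (\<Union>i\<in>I. bowen_ball T X (ms i) (xs i) \<epsilon>)"
  shows "bowen_C T X Z t n \<epsilon> \<le> (\<Sum>i. if i \<in> I then ennreal (2 powr (- t * real (ms i))) else 0)"
  unfolding bowen_C_def using assms by (intro INF_lower2[of "(I, xs, ms)"]) auto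

lemma bowen_C_ge_1:
  assumes "Z \<noteq> {}" "t \<le> 0"
  shows "1 \<le> bowen_C T X Z t n \<epsilon>"
  unfolding bowen_C_def
proof (rule INF_greatest, clarify)
  fix I :: "nat set" and xs ms
  assume "Z \<subseteq> (\<Union>i\<in>I. bowen_ball T X (ms i) (xs i) \<epsilon>)"
  then obtain i where "i \<in> I"
    using assms(1) by blast
  let ?w = "\<lambda>i. if i \<in> I then ennreal (2 powr (- t * real (ms i))) else 0"
  have "1 \<le> 2 powr (- t * real (ms i))"
    using assms(2) by (intro ge_one_powr_ge_zero) (auto simp: mult_nonpos_nonneg)
  then have "1 \<le> ?w i"
    using \<open>i \<in> I\<close> by (simp add: ennreal_leI)
  also have "?w i \<le> (\<Sum>i. ?w i)"
    using ennreal_suminf_lessD[of ?w "?w i" i] by (meson not_le order.irrefl)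
  finally show "1 \<le> (\<Sum>i. ?w i)" .
qed

lemma lengths_with_small_weight_sum:
  assumes "t > 0" "\<eta> > 0"
  shows "\<exists>ms. (\<forall>i. n \<le> ms i) \<and> (\<Sum>i. ennreal (2 powr (- t * real (ms i)))) \<le> ennreal \<eta>"
proof -
  have "((\<lambda>m. (2 powr (- t)) ^ m) \<longlongrightarrow> 0) sequentially"
    using assms(1) by (intro LIMSEQ_power_zero) (auto intro: powr_less_one)
  moreover have "2 powr (- t * real m) = (2 powr (- t)) ^ m" for m
    by (simp add: powr_realpow[symmetric] powr_powr)
  ultimately have lim: "((\<lambda>m. 2 powr (- t * real m)) \<longlongrightarrow> 0) sequentially"
    by simp
  have "\<exists>m\<ge>n. 2 powr (- t * real m) < \<eta> * (1/2) ^ Suc i" for i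
  proof -
    have "\<forall>\<^sub>F m in sequentially. 2 powr (- t * real m) < \<eta> * (1/2) ^ Suc i"
      by (rule order_tendstoD(2)[OF lim]) (use assms(2) in simp)
    then obtain N where "\<And>m. N \<le> m \<Longrightarrow> 2 powr (- t * real m) < \<eta> * (1/2) ^ Suc i"
      unfolding eventually_sequentially by blast
    then show ?thesis
      by (intro exI[of _ "max n N"]) simp
  qed
  then obtain ms where ms: "\<And>i. n \<le> ms i" "\<And>i. 2 powr (- t * real (ms i)) < \<eta> * (1/2) ^ Suc i"
    by metis
  have "(\<Sum>i. ennreal (2 powr (- t * real (ms i)))) \<le> (\<Sum>i. ennreal (\<eta> * (1/2) ^ Suc i))"
    using ms(2) by (intro suminf_le summableI ennreal_leI less_imp_le)
  also have "\<dots> = ennreal \<eta>"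
    using power_half_series[THEN sums_mult, of \<eta>] assms(2) by (intro suminf_ennreal_eq) auto
  finally show ?thesis
    using ms(1) by blast
qed

lemma bowen_C_eq_0_if_countable_cover:
  assumes "t > 0" "countable C" "C \<subseteq> X" "Z \<subseteq> (\<Union>x\<in>C. infinite_bowen_ball T X x \<epsilon>)"
  shows "bowen_C T X Z t n \<epsilon> = 0"
proof (cases "Z = {}")
  case True
  then show ?thesis
    using bowen_C_le_cover_sum[of "{}" _ X n _ Z T \<epsilon> t] by simp
next
  case False
  then have "C \<noteq> {}"
    using assms(4) by blast
  define xs where "xs = from_nat_into C"
  have "C = range xs"
    unfolding xs_def using \<open>C \<noteq> {}\<close> assms(2) by simp
  then have Z_cover: "Z \<subseteq> (\<Union>i. bowen_ball T X (ms i) (xs i) \<epsilon>)" for ms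
    using assms(4) infinite_bowen_ball_subset_bowen_ball[of T X _ \<epsilon>] by blast
  have xs_X: "xs i \<in> X" for i
    using \<open>C = range xs\<close> assms(3) by blast
  have small: "bowen_C T X Z t n \<epsilon> \<le> ennreal \<eta>" if "\<eta> > 0" for \<eta>
  proof -
    obtain ms where ms: "\<forall>i. n \<le> ms i" "(\<Sum>i. ennreal (2 powr (- t * real (ms i)))) \<le> ennreal \<eta>"
      using lengths_with_small_weight_sum[OF assms(1) \<open>\<eta> > 0\<close>] by blast
    have "bowen_C T X Z t n \<epsilon> \<le> (\<Sum>i. if i \<in> UNIV then ennreal (2 powr (- t * real (ms i))) else 0)"
      using xs_X ms(1) Z_cover[of ms] by (intro bowen_C_le_cover_sum) auto
    then show ?thesis
      using ms(2) by simp
  qed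
  have "bowen_C T X Z t n \<epsilon> \<le> 0"
    by (rule ennreal_le_epsilon) (simp add: small)
  then show ?thesis
    by simp
qed

lemma bowen_h_eq_0:
  assumes "Z \<noteq> {}" "\<And>t n. t > 0 \<Longrightarrow> bowen_C T X Z t n \<epsilon> = 0"
  shows "bowen_h T X Z \<epsilon> = 0"
proof -
  have "(\<lambda>n. bowen_C T X Z t n \<epsilon>) \<longlonglongrightarrow> 0 \<longleftrightarrow> t > 0" for t
  proof
    assume lim: "(\<lambda>n. bowen_C T X Z t n \<epsilon>) \<longlonglongrightarrow> 0"
    show "t > 0"
    proof (rule ccontr)
      assume "\<not> t > 0"
      then have "1 \<le> bowen_C T X Z t n \<epsilon>" for n
        using bowen_C_ge_1[OF assms(1)] by simp
      moreover obtain N where "bowen_C T X Z t N \<epsilon> < 1"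
        using order_tendstoD(2)[OF lim zero_less_one] by (auto simp: eventually_sequentially)
      ultimately show False
        by (meson not_le)
    qed
  qed (simp add: assms(2))
  then have "{ereal t | t. (\<lambda>n. bowen_C T X Z t n \<epsilon>) \<longlonglongrightarrow> 0} = ereal ` {0<..}"
    by auto
  also have "Inf \<dots> = 0"
  proof (rule antisym)
    show "Inf (ereal ` {0<..}) \<le> 0"
      by (rule ereal_le_epsilon2) (auto intro: Inf_lower)
  qed (auto intro: Inf_greatest)
  finally show ?thesis
    unfolding bowen_h_def .
qed

theorem mainTheorem12:
  fixes T :: "'a::metric_space \<Rightarrow> 'a" and X :: "'a set"
  assumes "compact X" and "continuous_on X T" and "T ` X \<subseteq> X"
  shows "periodic_points T X = {} \<or> htop T X (periodic_points T X) = 0"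
proof (cases "periodic_points T X = {}")
  case nonempty: False
  have "bowen_h T X (periodic_points T X) \<epsilon> = 0" if "\<epsilon> > 0" for \<epsilon>
  proof (rule bowen_h_eq_0[OF nonempty])
    obtain C where "countable C" "C \<subseteq> X"
      "periodic_points T X \<subseteq> (\<Union>x\<in>C. infinite_bowen_ball T X x \<epsilon>)"
      using periodic_points_countable_cover[OF assms \<open>\<epsilon> > 0\<close>] by blast
    then show "bowen_C T X (periodic_points T X) t n \<epsilon> = 0" if "t > 0" for t n
      using bowen_C_eq_0_if_countable_cover[OF that] by blast
  qed
  then have "\<forall>\<^sub>F \<epsilon> in at_right 0. bowen_h T X (periodic_points T X) \<epsilon> = 0"
    by (auto simp: eventually_at_right_field intro: exI[of _ 1])
  then have "((\<lambda>\<epsilon>. bowen_h T X (periodic_points T X) \<epsilon>) \<longlongrightarrow> 0) (at_right 0)"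
    by (rule tendsto_eventually)
  then show ?thesis
    unfolding htop_def by (simp add: tendsto_Lim)
qed simp

end
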